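(* Let $p$ be a prime and let $A$, $B$ be nontrivial finite $p$-groups. Let $p^d$ be the maximum order of an element of $A$. Then $$a(B)\le a(A\wr B)\le p^d a(B).$$
   Context: For a finite group $G$, the average order is $a(G)=\frac{1}{|G|}\sum_{g\in G}\mathrm{order}(g)$. For groups $A,B$, let $K=\prod_{b\in B}A$, on which $B$ acts by $x\cdot(\alpha_b)_b=(\alpha_{x^{-1}b})_b$ for $x\in B$; the wreath product $A\wr B$ is the semidirect product $K\rtimes B$ for this action. *)

theory Defs
  imports "HOL-Algebra.Algebra"
begin

definition avg_order :: "('a, 'b) monoid_scheme \<Rightarrow> real" where
  "avg_order G = (\<Sum>g\<in>carrier G. real (group.ord G g)) / real (card (carrier G))"

definition p_group :: "nat \<Rightarrow> ('a, 'b) monoid_scheme \<Rightarrow> bool" where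
  "p_group p G \<longleftrightarrow> group G \<and> finite (carrier G) \<and> (\<exists>k. card (carrier G) = p ^ k)"

text \<open>Wreath product A wr B = K \<rtimes> B, K = functions carrier B \<rightarrow> carrier A (extensional),
  with action (x.alpha)(b) = alpha(inverse x * b); product (f,x)(g,y) = (f (x.g), xy).\<close>
definition wreath :: "('a, 'c) monoid_scheme \<Rightarrow> ('b, 'd) monoid_scheme
    \<Rightarrow> (('b \<Rightarrow> 'a) \<times> 'b) monoid" where
  "wreath A B = \<lparr> carrier = (carrier B \<rightarrow>\<^sub>E carrier A) \<times> carrier B,
     monoid.mult = (\<lambda>(f, x) (g, y). ((\<lambda>c\<in>carrier B. f c \<otimes>\<^bsub>A\<^esub> g (inv\<^bsub>B\<^esub> x \<otimes>\<^bsub>B\<^esub> c)),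
                               x \<otimes>\<^bsub>B\<^esub> y)),
     monoid.one = ((\<lambda>c\<in>carrier B. \<one>\<^bsub>A\<^esub>), \<one>\<^bsub>B\<^esub>) \<rparr>"

end

theory Submission
  imports Defs "HOL-Computational_Algebra.Primes"
begin

text \<open>The projection \<open>(f, x) \<mapsto> x\<close> is a homomorphism from \<open>A \<wr> B\<close> onto \<open>B\<close>, so the order
  of \<open>x\<close> divides that of \<open>w = (f, x)\<close>. Conversely \<open>w\<^bsup>ord x\<^esup>\<close> lies in the base group
  \<open>A\<^bsup>B\<^esup>\<close>, where powers are taken pointwise, so its order divides the exponent \<open>p\<^sup>d\<close>
  of the p-group \<open>A\<close>. Hence \<open>ord x \<le> ord w \<le> p\<^sup>d ord x\<close>, and averaging over the
  carrier, each fibre of the projection having \<open>|A|\<^bsup>|B|\<^esup>\<close> elements, gives both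
  inequalities.\<close>

lemma (in group_hom) ord_hom_dvd:
  assumes "x \<in> carrier G"
  shows "H.ord (h x) dvd G.ord x"
proof -
  have "h x [^]\<^bsub>H\<^esub> G.ord x = \<one>\<^bsub>H\<^esub>"
    using assms by (simp flip: hom_nat_pow)
  then show ?thesis
    using assms by (simp add: H.pow_eq_id)
qed

lemma (in group_hom) ord_hom_le:
  assumes "finite (carrier G)" "x \<in> carrier G"
  shows "H.ord (h x) \<le> G.ord x"
  using assms ord_hom_dvd[OF assms(2)] G.ord_ge_1[OF assms] by (simp add: dvd_imp_le)

lemma p_group_ord_dvd_Max:
  assumes p: "Factorial_Ring.prime p" and "p_group p G" and a: "a \<in> carrier G"
  shows "group.ord G a dvd Max (group.ord G ` carrier G)"
proof -
  obtain k where "group G" and fin: "finite (carrier G)" and order: "order G = p ^ k"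
    using assms(2) unfolding p_group_def order_def by blast
  interpret group G by fact
  have prime_power_ord: "\<exists>i. ord x = p ^ i" if "x \<in> carrier G" for x
    using ord_dvd_group_order[OF that] unfolding order divides_primepow_nat[OF p] by blast
  have "Max (ord ` carrier G) \<in> ord ` carrier G"
    using fin a by (intro Max_in) auto
  then obtain b where b: "b \<in> carrier G" "Max (ord ` carrier G) = ord b"
    by blast
  obtain j where j: "Max (ord ` carrier G) = p ^ j"
    using prime_power_ord[OF b(1)] b(2) by auto
  obtain i where i: "ord a = p ^ i"
    using prime_power_ord[OF a] by blast
  have "ord a \<le> Max (ord ` carrier G)"
    using fin a by (intro Max_ge) auto
  then have "i \<le> j"
    unfolding i j by (rule power_le_imp_le_exp[OF prime_gt_1_nat[OF p]])
  then show ?thesis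
    unfolding i j by (rule le_imp_power_dvd)
qed

lemma avg_order_bounds_of_carrier_product:
  fixes G :: "('a \<times> 'b, 'c) monoid_scheme" and H :: "('b, 'd) monoid_scheme"
  assumes carrier: "carrier G = K \<times> carrier H" and "finite K" "K \<noteq> {}" "finite (carrier H)"
    and lower: "\<And>w. w \<in> carrier G \<Longrightarrow> group.ord H (snd w) \<le> group.ord G w"
    and upper: "\<And>w. w \<in> carrier G \<Longrightarrow> group.ord G w \<le> e * group.ord H (snd w)"
  shows "avg_order H \<le> avg_order G \<and> avg_order G \<le> real e * avg_order H"
proof -
  define SH where "SH = (\<Sum>x\<in>carrier H. real (group.ord H x))"
  define SG where "SG = (\<Sum>w\<in>carrier G. real (group.ord G w))"
  have fibres: "(\<Sum>w\<in>carrier G. real (group.ord H (snd w))) = real (card K) * SH"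
    by (simp add: carrier SH_def sum.cartesian_product')
  have lower_sum: "real (card K) * SH \<le> SG"
    unfolding SG_def fibres[symmetric] using lower by (intro sum_mono) simp
  have upper_sum: "SG \<le> real e * (real (card K) * SH)"
  proof -
    have "SG \<le> (\<Sum>w\<in>carrier G. real e * real (group.ord H (snd w)))"
      unfolding SG_def using upper by (intro sum_mono) (simp flip: of_nat_mult)
    then show ?thesis
      by (simp add: fibres flip: sum_distrib_left)
  qed
  have avg_G: "avg_order G = SG / (real (card K) * real (card (carrier H)))"
    by (simp add: avg_order_def SG_def carrier card_cartesian_product)
  have avg_H: "avg_order H = real (card K) * SH / (real (card K) * real (card (carrier H)))"
    using assms(2,3) by (simp add: avg_order_def SH_def card_gt_0_iff)
  show ?thesis
    unfolding avg_G avg_H times_divide_eq_right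
    by (intro conjI divide_right_mono lower_sum upper_sum) simp_all
qed

lemma wreath_carrier [simp]: "carrier (wreath A B) = (carrier B \<rightarrow>\<^sub>E carrier A) \<times> carrier B"
  by (simp add: wreath_def)

lemma wreath_mult [simp]: "(f, x) \<otimes>\<^bsub>wreath A B\<^esub> (g, y) =
   ((\<lambda>c\<in>carrier B. f c \<otimes>\<^bsub>A\<^esub> g (inv\<^bsub>B\<^esub> x \<otimes>\<^bsub>B\<^esub> c)), x \<otimes>\<^bsub>B\<^esub> y)"
  by (simp add: wreath_def)

lemma wreath_one [simp]: "\<one>\<^bsub>wreath A B\<^esub> = ((\<lambda>c\<in>carrier B. \<one>\<^bsub>A\<^esub>), \<one>\<^bsub>B\<^esub>)"
  by (simp add: wreath_def)

lemma wreath_group: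
  assumes "group A" "group B"
  shows "group (wreath A B)"
proof -
  interpret A: group A by fact
  interpret B: group B by fact
  show ?thesis
  proof (rule groupI)
    fix u v assume "u \<in> carrier (wreath A B)" "v \<in> carrier (wreath A B)"
    then show "u \<otimes>\<^bsub>wreath A B\<^esub> v \<in> carrier (wreath A B)"
      by (cases u; cases v) (auto simp: PiE_iff)
  next
    fix u v w
    assume "u \<in> carrier (wreath A B)" "v \<in> carrier (wreath A B)" "w \<in> carrier (wreath A B)"
    then show "u \<otimes>\<^bsub>wreath A B\<^esub> v \<otimes>\<^bsub>wreath A B\<^esub> w = u \<otimes>\<^bsub>wreath A B\<^esub> (v \<otimes>\<^bsub>wreath A B\<^esub> w)"
      by (cases u; cases v; cases w)
         (auto simp: PiE_iff B.inv_mult_group B.m_assoc A.m_assoc intro!: restrict_ext)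
  next
    fix u assume "u \<in> carrier (wreath A B)"
    then show "\<one>\<^bsub>wreath A B\<^esub> \<otimes>\<^bsub>wreath A B\<^esub> u = u"
      by (cases u) (auto simp: PiE_iff fun_eq_iff extensional_def)
  next
    fix u assume "u \<in> carrier (wreath A B)"
    then obtain f x where u: "u = (f, x)" "f \<in> carrier B \<rightarrow>\<^sub>E carrier A" "x \<in> carrier B"
      by auto
    define g where "g = (\<lambda>c\<in>carrier B. inv\<^bsub>A\<^esub> (f (x \<otimes>\<^bsub>B\<^esub> c)))"
    have "(g, inv\<^bsub>B\<^esub> x) \<in> carrier (wreath A B)"
      using u by (auto simp: g_def PiE_iff)
    moreover have "(g, inv\<^bsub>B\<^esub> x) \<otimes>\<^bsub>wreath A B\<^esub> u = \<one>\<^bsub>wreath A B\<^esub>"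
      using u by (auto simp: g_def PiE_iff B.m_assoc[symmetric] intro!: restrict_ext)
    ultimately show "\<exists>y\<in>carrier (wreath A B). y \<otimes>\<^bsub>wreath A B\<^esub> u = \<one>\<^bsub>wreath A B\<^esub>"
      by blast
  qed simp
qed

lemma wreath_snd_group_hom:
  assumes "group A" "group B"
  shows "group_hom (wreath A B) B snd"
proof -
  have "snd \<in> hom (wreath A B) B"
    by (auto simp: hom_def PiE_iff split: prod.splits)
  then show ?thesis
    by (simp add: group_hom_def group_hom_axioms_def wreath_group assms)
qed

lemma wreath_base_pow:
  assumes "group A" "group B" "g \<in> carrier B \<rightarrow>\<^sub>E carrier A"
  shows "(g, \<one>\<^bsub>B\<^esub>) [^]\<^bsub>wreath A B\<^esub> (n::nat) = ((\<lambda>c\<in>carrier B. g c [^]\<^bsub>A\<^esub> n), \<one>\<^bsub>B\<^esub>)"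
proof (induction n)
  case 0
  show ?case by (simp add: restrict_def)
next
  case (Suc n)
  interpret A: group A by fact
  interpret B: group B by fact
  show ?case using Suc assms(3) by (auto simp: PiE_iff intro!: restrict_ext)
qed

lemma wreath_ord_ge:
  assumes "group A" "group B" "finite (carrier A)" "finite (carrier B)"
    and w: "w \<in> carrier (wreath A B)"
  shows "group.ord B (snd w) \<le> group.ord (wreath A B) w"
proof -
  interpret group_hom "wreath A B" B snd
    using assms(1,2) by (rule wreath_snd_group_hom)
  show ?thesis
    using assms by (intro ord_hom_le) (simp_all add: finite_PiE)
qed

lemma wreath_ord_le:
  assumes "group A" "group B" "finite (carrier B)" "e > 0"
    and exp: "\<And>a. a \<in> carrier A \<Longrightarrow> a [^]\<^bsub>A\<^esub> e = \<one>\<^bsub>A\<^esub>"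
    and w: "w \<in> carrier (wreath A B)"
  shows "group.ord (wreath A B) w \<le> e * group.ord B (snd w)"
proof -
  interpret B: group B by fact
  interpret W: group "wreath A B" by (rule wreath_group) fact+
  interpret group_hom "wreath A B" B snd
    using assms(1,2) by (rule wreath_snd_group_hom)
  define n where "n = B.ord (snd w)"
  have sw: "snd w \<in> carrier B" using w by auto
  have "snd (w [^]\<^bsub>wreath A B\<^esub> n) = \<one>\<^bsub>B\<^esub>"
    using w sw by (simp add: hom_nat_pow n_def)
  then obtain g where g: "w [^]\<^bsub>wreath A B\<^esub> n = (g, \<one>\<^bsub>B\<^esub>)" and gK: "g \<in> carrier B \<rightarrow>\<^sub>E carrier A"
    using W.nat_pow_closed[OF w] by (metis mem_Sigma_iff prod.collapse wreath_carrier)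
  have "(g, \<one>\<^bsub>B\<^esub>) [^]\<^bsub>wreath A B\<^esub> e = \<one>\<^bsub>wreath A B\<^esub>"
    using gK exp by (auto simp: wreath_base_pow[OF assms(1,2) gK] PiE_iff intro!: restrict_ext)
  then have "w [^]\<^bsub>wreath A B\<^esub> (n * e) = \<one>\<^bsub>wreath A B\<^esub>"
    using g by (simp add: W.nat_pow_pow[OF w, symmetric])
  then have "W.ord w dvd n * e"
    using W.pow_eq_id[OF w] by simp
  moreover have "n > 0"
    using B.ord_ge_1[OF assms(3) sw] by (simp add: n_def)
  ultimately show ?thesis
    using \<open>e > 0\<close> by (simp add: n_def dvd_imp_le mult.commute)
qed

theorem theorem3:
  fixes A :: "('a, 'c) monoid_scheme" and B :: "('b, 'd) monoid_scheme"
    and p d :: nat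
  assumes "Factorial_Ring.prime p"
    and "p_group p A" and "p_group p B"
    and "carrier A \<noteq> {\<one>\<^bsub>A\<^esub>}" and "carrier B \<noteq> {\<one>\<^bsub>B\<^esub>}"
    and "p ^ d = Max (group.ord A ` carrier A)"
  shows "avg_order B \<le> avg_order (wreath A B)
       \<and> avg_order (wreath A B) \<le> real (p ^ d) * avg_order B"
proof -
  have A: "group A" "finite (carrier A)" and B: "group B" "finite (carrier B)"
    using assms(2,3) by (auto simp: p_group_def)
  have exponent: "a [^]\<^bsub>A\<^esub> p ^ d = \<one>\<^bsub>A\<^esub>" if "a \<in> carrier A" for a
    using p_group_ord_dvd_Max[OF assms(1,2) that] group.pow_eq_id[OF A(1) that] assms(6)
    by simp
  have "p ^ d > 0"
    using prime_gt_0_nat[OF assms(1)] by simp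
  moreover have "carrier B \<rightarrow>\<^sub>E carrier A \<noteq> {}"
    using monoid.one_closed[OF group.is_monoid[OF A(1)]] by (auto simp: PiE_eq_empty_iff)
  ultimately show ?thesis
    using wreath_ord_ge[OF A(1) B(1) A(2) B(2)] wreath_ord_le[OF A(1) B(1) B(2) _ exponent]
    by (intro avg_order_bounds_of_carrier_product[OF wreath_carrier])
       (simp_all add: finite_PiE A B)
qed

end
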